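(* Let $D$ be a long knot diagram (possibly with null vertices) and let $a\neq b$ be two points on edges of $D$, away from crossings and null vertices. If $D'$ is obtained from $D$ by a Reidemeister move (of type R1, R2 or R3, with any orientations) performed inside a disk that contains neither $a$ nor $b$, then $\tilde g_{ab}$ computed in $D'$ equals $\tilde g_{ab}$ computed in $D$. Consequently $\tilde g_{ab}$ is unchanged under any sequence of Reidemeister moves performed away from $a$ and $b$, and the same holds for $\tilde g_{\nu ab}$ for $\nu=1,2,3$.
   Context: A long knot diagram is a planar diagram of a long oriented knot. It may contain null vertices: marked points on the knot (away from crossings) whose only role is to cut edges. Edges are the arcs obtained by cutting the knot at every crossing (on both strands) and at every null vertex; they are labelled by distinct labels, and for a label $\ell$ we write $\ell^+$ for the label of the next edge along the orientation. A crossing is $c=(s,i,j)$ with sign $s=\pm1$, incoming over-edge $i$ and incoming under-edge $j$ (outgoing over-edge $i^+$, outgoing under-edge $j^+$). A null vertex with incoming edge $j$ and outgoing edge $k$ is recorded by $(j,k)$. Let $A=I+\sum_cA_c+\sum_{\mathrm{nv}}A_{\mathrm{nv}}$ (square matrix indexed by edge labels over $\mathbb{Z}[T^{\pm1}]$), where for $c=(s,i,j)$, $A_c$ is zero except for entry $-T^s$ at $(i,i^+)$, $T^s-1$ at $(i,j^+)$ and $-1$ at $(j,j^+)$; and for a null vertex $(j,k)$, $A_{\mathrm{nv}}$ is zero except for $-1$ at $(j,k)$. Let $G=(g_{\alpha\beta})=A^{-1}$ over $\mathbb{Q}(T)$. For distinct points $a,b$ on edges $\alpha,\beta$ (away from crossings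 and null vertices), $\tilde g_{ab}=g_{\alpha\beta}$ if $\alpha\neq\beta$ or if $\alpha=\beta$ and $a$ precedes $b$ along the orientation, and $\tilde g_{ab}=g_{\alpha\beta}-1$ if $\alpha=\beta$ and $a$ comes after $b$. For indeterminates $T_1,T_2$ and $T_3=T_1T_2$, $\tilde g_{\nu ab}$ is $\tilde g_{ab}$ with $T$ replaced by $T_\nu$. Since the diagrams coincide outside the disk, the points $a,b$ make sense in both. *)

theory Defs
  imports "HOL-Computational_Algebra.Polynomial" "HOL-Computational_Algebra.Fraction_Field"
    "Jordan_Normal_Form.Matrix"
begin

text \<open>A long knot diagram is recorded by the sequence of events met when travelling along
the long knot in its orientation: passing a crossing named c (of sign s) on the over- or
under-strand, passing a null vertex, or passing one of the two marked points a, b.  Edges are labelled 0,1,2,... in order along the knot,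
so that the successor label of l is l+1.\<close>

datatype event = Over nat int | Under nat int | NullV | PtA | PtB

fun is_over :: "nat \<Rightarrow> event \<Rightarrow> bool" where
  "is_over c (Over d s) = (c = d)" | "is_over c _ = False"

fun is_under :: "nat \<Rightarrow> event \<Rightarrow> bool" where
  "is_under c (Under d s) = (c = d)" | "is_under c _ = False"

definition wf_diag :: "event list \<Rightarrow> bool" where
  "wf_diag xs \<longleftrightarrow>
     count_list xs PtA = 1 \<and> count_list xs PtB = 1 \<and>
     (\<forall>c. length (filter (is_over c) xs) = length (filter (is_under c) xs)
          \<and> length (filter (is_over c) xs) \<le> 1) \<and>
     (\<forall>c s s'. Over c s \<in> set xs \<longrightarrow> Under c s' \<in> set xs \<longrightarrow> s = s') \<and>
     (\<forall>c s. Over c s \<in> set xs \<or> Under c s \<in> set xs \<longrightarrow> s = 1 \<or> s = -1)"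

definition cuts :: "event \<Rightarrow> bool" where
  "cuts e \<longleftrightarrow> e \<noteq> PtA \<and> e \<noteq> PtB"

type_synonym qT = "rat poly fract"

definition Tv :: qT where "Tv = Fract [:0, 1:] 1"

definition under_pos :: "event list \<Rightarrow> nat \<Rightarrow> nat" where
  "under_pos ys c = (LEAST j. j < length ys \<and> is_under c (ys ! j))"

text \<open>Contribution of the k-th cutting event (whose incoming edge is k) to entry (r,q).\<close>
definition contrib :: "event list \<Rightarrow> nat \<Rightarrow> nat \<Rightarrow> nat \<Rightarrow> qT" where
  "contrib ys k r q =
     (case ys ! k of
        Over c s \<Rightarrow> (if r = k \<and> q = k + 1 then - (Tv powi s) else 0)
                   + (if r = k \<and> q = under_pos ys c + 1 then Tv powi s - 1 else 0)
      | Under c s \<Rightarrow> (if r = k \<and> q = k + 1 then -1 else 0)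
      | NullV \<Rightarrow> (if r = k \<and> q = k + 1 then -1 else 0)
      | PtA \<Rightarrow> 0
      | PtB \<Rightarrow> 0)"

definition num_edges :: "event list \<Rightarrow> nat" where
  "num_edges xs = length (filter cuts xs) + 1"

definition Amat :: "event list \<Rightarrow> qT mat" where
  "Amat xs = (let ys = filter cuts xs in
     mat (length ys + 1) (length ys + 1)
       (\<lambda>(r, q). (if r = q then 1 else 0) + (\<Sum>k<length ys. contrib ys k r q)))"

definition Gmat :: "event list \<Rightarrow> qT mat" where
  "Gmat xs = (SOME B. B \<in> carrier_mat (num_edges xs) (num_edges xs)
                  \<and> Amat xs * B = 1\<^sub>m (num_edges xs) \<and> B * Amat xs = 1\<^sub>m (num_edges xs))"

definition pos_of :: "event list \<Rightarrow> event \<Rightarrow> nat" where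
  "pos_of xs e = (LEAST p. p < length xs \<and> xs ! p = e)"

definition edge_at :: "event list \<Rightarrow> nat \<Rightarrow> nat" where
  "edge_at xs p = length (filter cuts (take p xs))"

definition gtilde :: "event list \<Rightarrow> qT" where
  "gtilde xs = (let pa = pos_of xs PtA; pb = pos_of xs PtB;
                    \<alpha> = edge_at xs pa; \<beta> = edge_at xs pb in
                 if \<alpha> = \<beta> \<and> pb < pa then Gmat xs $$ (\<alpha>, \<beta>) - 1 else Gmat xs $$ (\<alpha>, \<beta>))"

definition R1_step :: "event list \<Rightarrow> event list \<Rightarrow> bool" where
  "R1_step D D' \<longleftrightarrow> (\<exists>p0 p1 c s seg. (s = 1 \<or> s = -1) \<and>
      (seg = [Over c s, Under c s] \<or> seg = [Under c s, Over c s]) \<and>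
      D = p0 @ p1 \<and> D' = p0 @ seg @ p1)"

text \<open>R2: the over-strand passes over the under-strand at two crossings of opposite sign;
the two strands are parallel or antiparallel; either strand may come first along the knot.\<close>
definition R2_step :: "event list \<Rightarrow> event list \<Rightarrow> bool" where
  "R2_step D D' \<longleftrightarrow> (\<exists>p0 p1 p2 c1 c2 s par ofirst ov un. c1 \<noteq> c2 \<and> (s = 1 \<or> s = -1) \<and>
      ov = [Over c1 s, Over c2 (- s)] \<and>
      un = (if par then [Under c1 s, Under c2 (- s)] else [Under c2 (- s), Under c1 s]) \<and>
      D = p0 @ p1 @ p2 \<and>
      D' = p0 @ (if ofirst then ov else un) @ p1 @ (if ofirst then un else ov) @ p2)"

text \<open>R3, modelled on three straight oriented lines L0: y=0 (direction e0*(1,0)),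
L1: x=0 (direction e1*(0,1)), L2: x+y=1 (direction e2*(1,-1)); the move translates L2 across
the point L0\<inter>L1 to x+y=-1, which reverses the order of the two crossings on every line.
The height function h (a permutation of 0,1,2) decides over/under; the sign of a crossing
is the sign of the cross product (over direction) x (under direction).\<close>

definition kap0 :: "(nat \<Rightarrow> int) \<Rightarrow> nat \<Rightarrow> nat \<Rightarrow> int" where
  "kap0 e i j = (if i = 0 \<and> j = 1 then e 0 * e 1
                 else if i = 0 \<and> j = 2 then - (e 0 * e 2)
                 else - (e 1 * e 2))"

definition kap :: "(nat \<Rightarrow> int) \<Rightarrow> nat \<Rightarrow> nat \<Rightarrow> int" where
  "kap e i j = (if i < j then kap0 e i j else - kap0 e j i)"

definition r3_event :: "(nat \<Rightarrow> int) \<Rightarrow> (nat \<Rightarrow> nat) \<Rightarrow> (nat \<Rightarrow> nat \<Rightarrow> nat) \<Rightarrow> nat \<Rightarrow> nat \<Rightarrow> event" where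
  "r3_event e h cn i j =
     (if h j < h i then Over (cn (min i j) (max i j)) (kap e i j)
      else Under (cn (min i j) (max i j)) (kap e j i))"

definition r3_order :: "(nat \<Rightarrow> int) \<Rightarrow> nat \<Rightarrow> nat list" where
  "r3_order e i = (if i = 0 then (if e 0 = 1 then [1, 2] else [2, 1])
                   else if i = 1 then (if e 1 = 1 then [0, 2] else [2, 0])
                   else (if e 2 = 1 then [1, 0] else [0, 1]))"

definition r3_before :: "(nat \<Rightarrow> int) \<Rightarrow> (nat \<Rightarrow> nat) \<Rightarrow> (nat \<Rightarrow> nat \<Rightarrow> nat) \<Rightarrow> nat \<Rightarrow> event list" where
  "r3_before e h cn i = map (r3_event e h cn i) (r3_order e i)"

definition r3_after :: "(nat \<Rightarrow> int) \<Rightarrow> (nat \<Rightarrow> nat) \<Rightarrow> (nat \<Rightarrow> nat \<Rightarrow> nat) \<Rightarrow> nat \<Rightarrow> event list" where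
  "r3_after e h cn i = rev (r3_before e h cn i)"

definition R3_step :: "event list \<Rightarrow> event list \<Rightarrow> bool" where
  "R3_step D D' \<longleftrightarrow> (\<exists>p0 p1 p2 p3 e h cn (\<sigma> :: nat \<Rightarrow> nat).
      (\<forall>i<3. e i = 1 \<or> e i = -1) \<and>
      h ` {0, 1, 2} = {0, 1, 2} \<and> \<sigma> ` {0, 1, 2} = {0, 1, 2} \<and>
      distinct [cn 0 1, cn 0 2, cn 1 2] \<and>
      D = p0 @ r3_before e h cn (\<sigma> 0) @ p1 @ r3_before e h cn (\<sigma> 1) @ p2
             @ r3_before e h cn (\<sigma> 2) @ p3 \<and>
      D' = p0 @ r3_after e h cn (\<sigma> 0) @ p1 @ r3_after e h cn (\<sigma> 1) @ p2
             @ r3_after e h cn (\<sigma> 2) @ p3)"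

definition reid_move :: "event list \<Rightarrow> event list \<Rightarrow> bool" where
  "reid_move D D' \<longleftrightarrow> wf_diag D \<and> wf_diag D' \<and>
     (R1_step D D' \<or> R1_step D' D \<or> R2_step D D' \<or> R2_step D' D \<or>
      R3_step D D' \<or> R3_step D' D)"

end

theory Submission
  imports Defs "HOL-Computational_Algebra.Polynomial_Factorial" "Jordan_Normal_Form.Determinant"
begin

text \<open>Let \<beta> be the edge of b. The \<beta>-th column of G = A^-1, lowered by 1 on the part of \<beta> after b,
is a colouring of the diagram: an assignment of values to the positions along the knot that obeys
a local rule at every crossing passage, null vertex and marked point, and whose value at a is the
value of gtilde. Conversely, two colourings that vanish at the end of the knot have the same value
at a: their difference d satisfies d p - d q = T^k (d (p+1) - d q) at every step, and such a
recurrence over Q(T) has only the trivial solution, because after clearing denominators evaluation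
at T = 1 shows that T - 1 divides every entry arbitrarily often. (The same recurrence shows that A
is invertible.) So it suffices to turn every colouring of D into a colouring of D' with the same
value at a. For a Reidemeister move away from a and b this is a local modification: all values
outside the disk are kept and only the values attached to the crossings of the move change.\<close>

section \<open>Solutions of the crossing recurrence\<close>

lemma Tv_eq_to_fract: "Tv = to_fract [:0, 1:]"
  by (simp add: Tv_def to_fract_def)

lemma Tv_nonzero [simp]: "Tv \<noteq> 0"
  by (simp add: Tv_eq_to_fract)

lemma to_fract_power: "to_fract (x ^ n) = to_fract x ^ n"
  by (induction n) simp_all

lemma fract_common_denominator:
  fixes d :: "'i \<Rightarrow> 'a::idom fract"
  assumes "finite I"
  shows "\<exists>P g. P \<noteq> 0 \<and> (\<forall>i\<in>I. d i * to_fract P = to_fract (g i))"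
  using assms
proof (induction rule: finite_induct)
  case empty
  show ?case by (intro exI[of _ 1]) simp
next
  case (insert i I)
  then obtain P g where P: "P \<noteq> 0" "\<forall>j\<in>I. d j * to_fract P = to_fract (g j)"
    by blast
  obtain a b where di: "d i = Fract a b" and b: "b \<noteq> 0"
    by (cases "d i")
  have "d j * to_fract (P * b) = to_fract (((\<lambda>j. g j * b)(i := a * P)) j)"
    if "j \<in> insert i I" for j
  proof (cases "j = i")
    case True
    have "d i * to_fract (P * b) = (d i * to_fract b) * to_fract P"
      by (simp add: ac_simps)
    also have "\<dots> = to_fract (a * P)"
      using b by (simp add: di Fract_conv_to_fract)
    finally show ?thesis
      using True by simp
  next
    case False
    with that have "d j * to_fract P = to_fract (g j)"
      using P(2) by simp
    then have "d j * to_fract P * to_fract b = to_fract (g j * b)"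
      by simp
    with False show ?thesis
      by (simp add: mult.assoc)
  qed
  moreover have "P * b \<noteq> 0"
    using P(1) b by simp
  ultimately show ?case
    by blast
qed

definition crossing_recurrence :: "nat \<Rightarrow> (nat \<Rightarrow> qT) \<Rightarrow> bool" where
  "crossing_recurrence m d \<longleftrightarrow> d m = 0 \<and>
     (\<forall>p<m. \<exists>q\<le>m. \<exists>k::int. d p - d q = Tv powi k * (d (Suc p) - d q))"

lemma crossing_recurrence_scale:
  assumes c: "c \<noteq> 0" and d': "\<And>p. p \<le> m \<Longrightarrow> d' p = c * d p"
  shows "crossing_recurrence m d' \<longleftrightarrow> crossing_recurrence m d"
proof -
  have "d' p - d' q = Tv powi k * (d' (Suc p) - d' q) \<longleftrightarrow> d p - d q = Tv powi k * (d (Suc p) - d q)"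
    if "p < m" "q \<le> m" for p q k
    using that c by (simp add: d' right_diff_distrib[symmetric] mult.left_commute)
  then have "(\<exists>q\<le>m. \<exists>k. d' p - d' q = Tv powi k * (d' (Suc p) - d' q)) \<longleftrightarrow>
             (\<exists>q\<le>m. \<exists>k. d p - d q = Tv powi k * (d (Suc p) - d q))" if "p < m" for p
    using that by blast
  then show ?thesis
    using c by (auto simp: crossing_recurrence_def d')
qed

lemma poly_eq_at_1_if_Tv_relation:
  assumes eq: "to_fract f - to_fract h = Tv powi k * (to_fract g - to_fract h)"
  shows "poly f 1 = poly g 1"
proof -
  define X :: "rat poly" where "X = [:0, 1:]"
  have T: "Tv = to_fract X" by (simp add: X_def Tv_eq_to_fract)
  have "f - h = X ^ nat k * (g - h) \<or> X ^ nat (- k) * (f - h) = g - h"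
  proof (cases "k \<ge> 0")
    case True
    then have "to_fract (f - h) = to_fract (X ^ nat k * (g - h))"
      using eq by (simp add: T to_fract_power power_int_def power_inverse)
    then show ?thesis unfolding to_fract_eq_iff by blast
  next
    case False
    then have "to_fract (f - h) = inverse (to_fract (X ^ nat (- k))) * to_fract (g - h)"
      using eq by (simp add: T to_fract_power power_int_def power_inverse)
    then have "to_fract (X ^ nat (- k) * (f - h)) = to_fract (g - h)"
      by (simp add: X_def)
    then show ?thesis unfolding to_fract_eq_iff by blast
  qed
  moreover have "poly (X ^ n) 1 = 1" for n
    by (simp add: X_def poly_power)
  ultimately have "poly (f - h) 1 = poly (g - h) 1"
    by (metis mult_1 poly_mult)
  then show ?thesis by simp
qed

lemma crossing_recurrence_poly_root:
  assumes rec: "crossing_recurrence m (\<lambda>p. to_fract (f p))" and "p \<le> m"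
  shows "poly (f p) 1 = 0"
  using \<open>p \<le> m\<close>
proof (induction rule: inc_induct)
  case base
  then show ?case using rec by (simp add: crossing_recurrence_def)
next
  case (step n)
  then obtain q k where "to_fract (f n) - to_fract (f q) = Tv powi k * (to_fract (f (Suc n)) - to_fract (f q))"
    using rec by (auto simp: crossing_recurrence_def)
  then have "poly (f n) 1 = poly (f (Suc n)) 1"
    by (rule poly_eq_at_1_if_Tv_relation)
  with step.IH show ?case by simp
qed

lemma crossing_recurrence_poly_dvd:
  assumes "crossing_recurrence m (\<lambda>p. to_fract (f p))" and "p \<le> m"
  shows "[:-1, 1:] ^ n dvd f p"
  using assms
proof (induction n arbitrary: f)
  case 0
  then show ?case by simp
next
  case (Suc n)
  define X :: "rat poly" where "X = [:-1, 1:]"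
  define g where "g p = f p div X" for p
  have f: "f p = X * g p" if "p \<le> m" for p
  proof -
    have "X dvd f p"
      using crossing_recurrence_poly_root[OF Suc.prems(1) that] by (simp add: X_def poly_eq_0_iff_dvd)
    then show ?thesis
      unfolding g_def by (rule dvd_mult_div_cancel[symmetric])
  qed
  have X: "to_fract X \<noteq> 0"
    by (simp add: X_def)
  have fg: "to_fract (f p) = to_fract X * to_fract (g p)" if "p \<le> m" for p
    using f[OF that] by (simp only: to_fract_mult)
  have "crossing_recurrence m (\<lambda>p. to_fract (g p))"
    using crossing_recurrence_scale[of _ m "\<lambda>p. to_fract (f p)", OF X fg] Suc.prems(1) by blast
  then have "[:-1, 1:] ^ n dvd g p"
    using Suc.IH Suc.prems(2) by blast
  then show ?case
    unfolding f[OF Suc.prems(2)] X_def power_Suc by (rule mult_dvd_mono[OF dvd_refl])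
qed

lemma crossing_recurrence_poly_zero:
  assumes "crossing_recurrence m (\<lambda>p. to_fract (f p))" and "p \<le> m"
  shows "f p = 0"
proof (rule ccontr)
  assume "f p \<noteq> 0"
  from dvd_imp_degree_le[OF crossing_recurrence_poly_dvd[OF assms, of "Suc (degree (f p))"] this]
  show False
    by (simp only: degree_linear_power)
qed

lemma crossing_recurrence_imp_zero:
  assumes rec: "crossing_recurrence m d" and "p \<le> m"
  shows "d p = 0"
proof -
  obtain P f where P: "P \<noteq> 0" and f: "\<forall>q\<in>{..m}. d q * to_fract P = to_fract (f q)"
    using fract_common_denominator[of "{..m}" d] by auto
  have P': "to_fract P \<noteq> 0"
    using P by simp
  have "to_fract (f q) = to_fract P * d q" if "q \<le> m" for q
    using f that by (simp add: mult.commute)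
  then have "crossing_recurrence m (\<lambda>q. to_fract (f q))"
    using crossing_recurrence_scale[of _ m "\<lambda>q. to_fract (f q)", OF P'] rec by blast
  then have "f p = 0"
    using crossing_recurrence_poly_zero \<open>p \<le> m\<close> by blast
  moreover have "d p * to_fract P = to_fract (f p)"
    using f \<open>p \<le> m\<close> by simp
  ultimately show ?thesis
    using P by simp
qed

lemma nth_eq_if_length_filter_le_1:
  assumes "length (filter P xs) \<le> 1" and "i < length xs" "j < length xs" and "P (xs ! i)" "P (xs ! j)"
  shows "i = j"
proof (rule ccontr)
  assume "i \<noteq> j"
  then have "card {i, j} \<le> card {k. k < length xs \<and> P (xs ! k)}"
    using assms(2-) by (intro card_mono) auto
  then show False
    using assms(1) \<open>i \<noteq> j\<close> by (simp add: length_filter_conv_card)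
qed

lemma length_filter_pos: "x \<in> set xs \<Longrightarrow> P x \<Longrightarrow> 0 < length (filter P xs)"
  by (auto simp: filter_empty_conv)

lemma length_filter_mset_sum:
  assumes "mset X = mset A + mset B"
  shows "length (filter P X) = length (filter P A) + length (filter P B)"
proof -
  have "length (filter P X) = size (filter_mset P (mset X))"
    by (simp flip: mset_filter)
  also have "\<dots> = size (filter_mset P (mset A)) + size (filter_mset P (mset B))"
    by (simp add: assms)
  also have "\<dots> = length (filter P A) + length (filter P B)"
    by (simp flip: mset_filter)
  finally show ?thesis .
qed

lemma wf_diag_passages:
  assumes "wf_diag D"
  shows "length (filter (is_under c) D) = length (filter (is_over c) D)"
    and "length (filter (is_over c) D) \<le> 1"
proof -
  have "length (filter (is_over c) D) = length (filter (is_under c) D)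
          \<and> length (filter (is_over c) D) \<le> 1"
    using assms unfolding wf_diag_def by blast
  then show "length (filter (is_under c) D) = length (filter (is_over c) D)"
    and "length (filter (is_over c) D) \<le> 1"
    by simp_all
qed

lemma wf_diag_Under_of_Over:
  assumes wf: "wf_diag D" and "Over c s \<in> set D"
  shows "\<exists>u s'. u < length D \<and> D ! u = Under c s'"
proof -
  have "filter (is_over c) D \<noteq> []"
    using assms(2) by (metis filter_empty_conv is_over.simps(1))
  then have "filter (is_under c) D \<noteq> []"
    using wf_diag_passages(1)[OF wf, of c] by auto
  then obtain s' where "Under c s' \<in> set D"
    by (auto simp: filter_empty_conv elim: is_under.elims)
  then show ?thesis
    by (metis in_set_conv_nth)
qed

lemma wf_diag_marked_point:
  assumes "wf_diag D" and "e = PtA \<or> e = PtB"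
  shows "count_list D e = 1" and "e \<in> set D"
proof -
  show "count_list D e = 1"
    using assms unfolding wf_diag_def by blast
  then show "e \<in> set D"
    using count_list_0_iff[of D e] by simp
qed

lemma pos_of_nth:
  assumes "e \<in> set xs"
  shows "pos_of xs e < length xs" and "xs ! pos_of xs e = e"
  using LeastI_ex[of "\<lambda>p. p < length xs \<and> xs ! p = e"] assms
  by (auto simp: pos_of_def in_set_conv_nth)

lemma pos_of_unique:
  assumes "count_list xs e = 1" and "p < length xs" and "xs ! p = e"
  shows "p = pos_of xs e"
proof -
  have "length (filter ((=) e) xs) \<le> 1"
    using assms(1) by (simp add: count_list_eq_length_filter)
  moreover have "e \<in> set xs"
    using assms(2,3) nth_mem by blast
  ultimately show ?thesis
    by (intro nth_eq_if_length_filter_le_1[of "(=) e" xs] assms(2) pos_of_nth)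
      (simp_all add: assms(3) pos_of_nth)
qed

lemma edge_at_Suc:
  "p < length D \<Longrightarrow> edge_at D (Suc p) = edge_at D p + (if cuts (D ! p) then 1 else 0)"
  by (simp add: edge_at_def take_Suc_conv_app_nth)

lemma edge_at_mono:
  assumes "p \<le> p'"
  shows "edge_at D p \<le> edge_at D p'"
proof -
  obtain k where "p' = p + k"
    using assms le_iff_add by blast
  then show ?thesis
    by (simp add: edge_at_def take_add)
qed

lemma edge_at_le_length: "edge_at D p \<le> length (filter cuts D)"
proof -
  have "filter cuts D = filter cuts (take p D) @ filter cuts (drop p D)"
    by (simp flip: filter_append)
  then show ?thesis
    unfolding edge_at_def by (metis le_add1 length_append)
qed

lemma edge_at_length [simp]: "edge_at D (length D) = length (filter cuts D)"
  by (simp add: edge_at_def)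

lemma nth_filter_cuts_edge_at:
  assumes "p < length D" and "cuts (D ! p)"
  shows "filter cuts D ! edge_at D p = D ! p"
proof -
  have "filter cuts D = filter cuts (take p D) @ D ! p # filter cuts (drop (Suc p) D)"
    using arg_cong[OF id_take_nth_drop[OF assms(1)], of "filter cuts"] assms(2) by simp
  then show ?thesis by (simp add: edge_at_def nth_append)
qed

lemma edge_at_less_length:
  assumes "p < length D" and "cuts (D ! p)"
  shows "edge_at D p < length (filter cuts D)"
  using edge_at_Suc[OF assms(1)] assms(2) edge_at_le_length[of D "Suc p"] by simp

lemma edge_at_surj: "r \<le> edge_at D p \<Longrightarrow> \<exists>p'\<le>p. edge_at D p' = r"
proof (induction p)
  case 0
  then show ?case by (simp add: edge_at_def)
next
  case (Suc p)
  show ?case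
  proof (cases "r \<le> edge_at D p")
    case True
    then show ?thesis using Suc.IH le_SucI by blast
  next
    case False
    have "edge_at D (Suc p) \<le> Suc (edge_at D p)"
      by (cases "p < length D") (simp_all add: edge_at_Suc, simp add: edge_at_def)
    with False Suc.prems have "edge_at D (Suc p) = r"
      by linarith
    then show ?thesis by blast
  qed
qed

lemma edge_at_cut_position:
  assumes p: "p < length D" "cuts (D ! p)" and p0: "\<not> cuts (D ! p0)"
  shows "edge_at D p = edge_at D p0 \<Longrightarrow> p0 < p"
    and "p0 \<le> p \<Longrightarrow> edge_at D (Suc p) \<noteq> edge_at D p0"
proof -
  have Suc: "edge_at D (Suc p) = Suc (edge_at D p)"
    using edge_at_Suc[OF p(1)] p(2) by simp
  show "p0 < p" if "edge_at D p = edge_at D p0"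
  proof (rule ccontr)
    assume "\<not> p0 < p"
    moreover have "p0 \<noteq> p"
      using p(2) p0 by auto
    ultimately have "edge_at D (Suc p) \<le> edge_at D p0"
      by (intro edge_at_mono) simp
    with that Suc show False
      by simp
  qed
  show "edge_at D (Suc p) \<noteq> edge_at D p0" if "p0 \<le> p"
    using edge_at_mono[OF that, of D] Suc by simp
qed

lemma under_pos_eq_edge_at:
  assumes wf: "wf_diag D" and u: "u < length D" "D ! u = Under c s"
  shows "under_pos (filter cuts D) c = edge_at D u"
  unfolding under_pos_def
proof (rule Least_equality)
  have "cuts (D ! u)" using u by (simp add: cuts_def)
  then show at_u: "edge_at D u < length (filter cuts D) \<and> is_under c (filter cuts D ! edge_at D u)"
    using u by (simp add: edge_at_less_length nth_filter_cuts_edge_at)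
  have "filter (is_under c) (filter cuts D) = filter (is_under c) D"
    by (auto simp: filter_filter cuts_def intro!: filter_cong elim: is_under.elims)
  then have "length (filter (is_under c) (filter cuts D)) \<le> 1"
    using wf_diag_passages[OF wf, of c] by simp
  then show "edge_at D u \<le> j" if "j < length (filter cuts D) \<and> is_under c (filter cuts D ! j)" for j
    using that at_u nth_eq_if_length_filter_le_1[of "is_under c" "filter cuts D" j "edge_at D u"]
    by simp
qed

lemma crossing_recurrence_intro:
  assumes wf: "wf_diag D" and last: "d (length D) = 0"
    and Over: "\<And>p c s u s'. \<lbrakk>p < length D; D ! p = Over c s; u < length D; D ! u = Under c s'\<rbrakk>
                 \<Longrightarrow> d p - d (Suc u) = Tv powi s * (d (Suc p) - d (Suc u))"
    and other: "\<And>p. \<lbrakk>p < length D; \<forall>c s. D ! p \<noteq> Over c s\<rbrakk> \<Longrightarrow> d p = d (Suc p)"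
  shows "crossing_recurrence (length D) d"
  unfolding crossing_recurrence_def
proof (intro conjI allI impI)
  fix p assume p: "p < length D"
  show "\<exists>q\<le>length D. \<exists>k::int. d p - d q = Tv powi k * (d (Suc p) - d q)"
  proof (cases "\<exists>c s. D ! p = Over c s")
    case True
    then obtain c s where c: "D ! p = Over c s"
      by blast
    then obtain u s' where u: "u < length D" "D ! u = Under c s'"
      using wf_diag_Under_of_Over[OF wf] p nth_mem by metis
    then have "Suc u \<le> length D"
      by simp
    with Over[OF p c u] show ?thesis
      by blast
  next
    case False
    then have "d p = d (Suc p)"
      using other[OF p] by blast
    with p show ?thesis
      by (intro exI[of _ p] conjI exI[of _ 0]) simp_all
  qed
qed (rule last)

section \<open>The rows of A along the knot\<close>

lemma contrib_other_row: "k \<noteq> r \<Longrightarrow> contrib ys k r q = 0"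
  by (simp add: contrib_def split: event.split)

lemma Amat_index:
  assumes "r < num_edges D" "q < num_edges D"
  shows "Amat D $$ (r, q) = (if r = q then 1 else 0)
           + (if r < length (filter cuts D) then contrib (filter cuts D) r r q else 0)"
proof -
  let ?ys = "filter cuts D"
  have "(\<Sum>k<length ?ys. contrib ?ys k r q) = (\<Sum>k<length ?ys. if k = r then contrib ?ys r r q else 0)"
    by (rule sum.cong) (simp_all add: contrib_other_row)
  then show ?thesis
    using assms by (simp add: Amat_def Let_def num_edges_def)
qed

lemma sum_contrib_row:
  assumes r: "r < length ys" and under: "\<And>c s. ys ! r = Over c s \<Longrightarrow> under_pos ys c < length ys"
  shows "(\<Sum>q<Suc (length ys). contrib ys r r q * x q) =
           (case ys ! r of
              Over c s \<Rightarrow> - (Tv powi s * x (Suc r) + (1 - Tv powi s) * x (Suc (under_pos ys c)))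
            | Under c s \<Rightarrow> - x (Suc r)
            | NullV \<Rightarrow> - x (Suc r)
            | _ \<Rightarrow> 0)"
proof (cases "ys ! r")
  case (Over c s)
  let ?u = "Suc (under_pos ys c)"
  have "(\<Sum>q<Suc (length ys). contrib ys r r q * x q) =
        (\<Sum>q<Suc (length ys). (if q = Suc r then - (Tv powi s) * x q else 0)
                               + (if q = ?u then (Tv powi s - 1) * x q else 0))"
    by (rule sum.cong) (auto simp: contrib_def Over algebra_simps)
  also have "\<dots> = - (Tv powi s) * x (Suc r) + (Tv powi s - 1) * x ?u"
    using r under[OF Over] by (simp add: sum.distrib)
  finally show ?thesis
    by (simp add: Over algebra_simps)
next
  case (Under c s)
  have "(\<Sum>q<Suc (length ys). contrib ys r r q * x q) = (\<Sum>q<Suc (length ys). if q = Suc r then - x q else 0)"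
    by (rule sum.cong) (auto simp: contrib_def Under)
  then show ?thesis
    using r by (simp add: Under)
next
  case NullV
  have "(\<Sum>q<Suc (length ys). contrib ys r r q * x q) = (\<Sum>q<Suc (length ys). if q = Suc r then - x q else 0)"
    by (rule sum.cong) (auto simp: contrib_def NullV)
  then show ?thesis
    using r by (simp add: NullV)
qed (simp_all add: contrib_def)

lemma Amat_carrier: "Amat D \<in> carrier_mat (num_edges D) (num_edges D)"
  by (simp add: Amat_def Let_def num_edges_def)

lemma Amat_mult_vec_nth:
  assumes x: "x \<in> carrier_vec (num_edges D)" and r: "r < num_edges D"
  shows "(Amat D *\<^sub>v x) $ r = x $ r +
           (if r < length (filter cuts D)
            then (\<Sum>q<num_edges D. contrib (filter cuts D) r r q * x $ q) else 0)"
proof -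
  have "(Amat D *\<^sub>v x) $ r = (\<Sum>q<num_edges D. Amat D $$ (r, q) * x $ q)"
    using r x Amat_carrier[of D]
    by (auto simp: scalar_prod_def lessThan_atLeast0 intro!: sum.cong)
  also have "\<dots> = (\<Sum>q<num_edges D. (if r = q then x $ q else 0)
      + (if r < length (filter cuts D) then contrib (filter cuts D) r r q * x $ q else 0))"
    using r by (intro sum.cong) (simp_all add: Amat_index distrib_right)
  finally show ?thesis
    using r by (simp add: sum.distrib)
qed

lemma Amat_mult_vec_last:
  assumes "x \<in> carrier_vec (num_edges D)"
  shows "(Amat D *\<^sub>v x) $ length (filter cuts D) = x $ length (filter cuts D)"
  using Amat_mult_vec_nth[OF assms] by (simp add: num_edges_def)

lemma Amat_mult_vec_at_Over:
  assumes wf: "wf_diag D" and x: "x \<in> carrier_vec (num_edges D)"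
    and p: "p < length D" "D ! p = Over c s" and u: "u < length D" "D ! u = Under c s'"
  shows "(Amat D *\<^sub>v x) $ edge_at D p = x $ edge_at D p
           - (Tv powi s * x $ edge_at D (Suc p) + (1 - Tv powi s) * x $ edge_at D (Suc u))"
proof -
  let ?ys = "filter cuts D"
  have cut: "cuts (D ! p)" "cuts (D ! u)"
    using p u by (simp_all add: cuts_def)
  have up: "under_pos ?ys c = edge_at D u"
    using under_pos_eq_edge_at[OF wf u] .
  have "(Amat D *\<^sub>v x) $ edge_at D p = x $ edge_at D p
          + (\<Sum>q<Suc (length ?ys). contrib ?ys (edge_at D p) (edge_at D p) q * x $ q)"
    using Amat_mult_vec_nth[OF x, of "edge_at D p"] edge_at_less_length[OF p(1) cut(1)]
    by (simp add: num_edges_def)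
  also have "\<dots> = x $ edge_at D p
          - (Tv powi s * x $ Suc (edge_at D p) + (1 - Tv powi s) * x $ Suc (edge_at D u))"
    using sum_contrib_row[of "edge_at D p" ?ys] edge_at_less_length[OF _ cut(2)] u(1)
      edge_at_less_length[OF p(1) cut(1)] nth_filter_cuts_edge_at[OF p(1) cut(1)] p(2) up
    by simp
  finally show ?thesis
    using edge_at_Suc p u cut by simp
qed

lemma Amat_mult_vec_at_strand:
  assumes x: "x \<in> carrier_vec (num_edges D)"
    and p: "p < length D" "D ! p = Under c s \<or> D ! p = NullV"
  shows "(Amat D *\<^sub>v x) $ edge_at D p = x $ edge_at D p - x $ edge_at D (Suc p)"
proof -
  let ?ys = "filter cuts D"
  have cut: "cuts (D ! p)"
    using p by (auto simp: cuts_def)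
  have "(Amat D *\<^sub>v x) $ edge_at D p = x $ edge_at D p
          + (\<Sum>q<Suc (length ?ys). contrib ?ys (edge_at D p) (edge_at D p) q * x $ q)"
    using Amat_mult_vec_nth[OF x, of "edge_at D p"] edge_at_less_length[OF p(1) cut]
    by (simp add: num_edges_def)
  also have "\<dots> = x $ edge_at D p - x $ Suc (edge_at D p)"
    using sum_contrib_row[of "edge_at D p" ?ys] edge_at_less_length[OF p(1) cut]
      nth_filter_cuts_edge_at[OF p(1) cut] p(2)
    by auto
  finally show ?thesis
    using edge_at_Suc p(1) cut by simp
qed

lemma Amat_kernel_trivial:
  assumes wf: "wf_diag D" and x: "x \<in> carrier_vec (num_edges D)"
    and Ax: "Amat D *\<^sub>v x = 0\<^sub>v (num_edges D)"
  shows "x = 0\<^sub>v (num_edges D)"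
proof -
  have row: "(Amat D *\<^sub>v x) $ edge_at D p = 0" for p
    using Ax edge_at_le_length[of D p] by (simp add: num_edges_def)
  have rec: "crossing_recurrence (length D) (\<lambda>p. x $ edge_at D p)"
  proof (rule crossing_recurrence_intro[OF wf])
    show "x $ edge_at D (length D) = 0"
      using Amat_mult_vec_last[OF x] Ax by (simp add: num_edges_def)
  next
    fix p c s u s'
    assume "p < length D" "D ! p = Over c s" "u < length D" "D ! u = Under c s'"
    then show "x $ edge_at D p - x $ edge_at D (Suc u)
                 = Tv powi s * (x $ edge_at D (Suc p) - x $ edge_at D (Suc u))"
      using row[of p] Amat_mult_vec_at_Over[OF wf x] by (simp add: algebra_simps)
  next
    fix p assume p: "p < length D" and "\<forall>c s. D ! p \<noteq> Over c s"
    then show "x $ edge_at D p = x $ edge_at D (Suc p)"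
      using row[of p] Amat_mult_vec_at_strand[OF x p] edge_at_Suc[OF p]
      by (cases "D ! p") (auto simp: cuts_def)
  qed
  show ?thesis
  proof (rule eq_vecI)
    fix r assume "r < dim_vec (0\<^sub>v (num_edges D) :: qT vec)"
    then obtain p where "p \<le> length D" "edge_at D p = r"
      using edge_at_surj[of r D "length D"] by (auto simp: num_edges_def)
    then show "x $ r = 0\<^sub>v (num_edges D) $ r"
      using crossing_recurrence_imp_zero[OF rec] \<open>r < _\<close> by fastforce
  qed (use x in simp)
qed

lemma Gmat_inverse:
  assumes wf: "wf_diag D"
  shows "Gmat D \<in> carrier_mat (num_edges D) (num_edges D)"
    and "Amat D * Gmat D = 1\<^sub>m (num_edges D)"
proof -
  let ?N = "num_edges D"
  have "det (Amat D) \<noteq> 0"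
    using det_0_iff_vec_prod_zero_field[OF Amat_carrier[of D]] Amat_kernel_trivial[OF wf] by blast
  then have "Amat D \<in> Units (ring_mat TYPE(qT) ?N ())"
    by (rule det_non_zero_imp_unit[OF Amat_carrier[of D]])
  then have "\<exists>B. B \<in> carrier_mat ?N ?N \<and> Amat D * B = 1\<^sub>m ?N \<and> B * Amat D = 1\<^sub>m ?N"
    by (auto simp: Units_def ring_mat_def)
  then have "Gmat D \<in> carrier_mat ?N ?N \<and> Amat D * Gmat D = 1\<^sub>m ?N \<and> Gmat D * Amat D = 1\<^sub>m ?N"
    unfolding Gmat_def by (rule someI_ex)
  then show "Gmat D \<in> carrier_mat ?N ?N" and "Amat D * Gmat D = 1\<^sub>m ?N"
    by auto
qed

lemma Gmat_column:
  assumes wf: "wf_diag D" and \<beta>: "\<beta> < num_edges D"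
  shows "col (Gmat D) \<beta> \<in> carrier_vec (num_edges D)"
    and "Amat D *\<^sub>v col (Gmat D) \<beta> = unit_vec (num_edges D) \<beta>"
proof -
  show "col (Gmat D) \<beta> \<in> carrier_vec (num_edges D)"
    using Gmat_inverse(1)[OF wf] by (metis carrier_matD(1) col_dim)
  have "Amat D *\<^sub>v col (Gmat D) \<beta> = col (Amat D * Gmat D) \<beta>"
    using col_mult2[OF Amat_carrier Gmat_inverse(1)[OF wf] \<beta>] by simp
  then show "Amat D *\<^sub>v col (Gmat D) \<beta> = unit_vec (num_edges D) \<beta>"
    using Gmat_inverse(2)[OF wf] \<beta> by simp
qed

section \<open>Colourings\<close>

text \<open>v and v' are the values just before and just after the event. U c is the value on the outgoing
under-edge of crossing c, so that an over-passage obeys the row of A belonging to it, and a is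
the value at the point a. The jump of 1 at b accounts for the right-hand side of A x = (unit vector
at \<beta>).\<close>

fun colour_step :: "(nat \<Rightarrow> qT) \<Rightarrow> qT \<Rightarrow> event \<Rightarrow> qT \<Rightarrow> qT \<Rightarrow> bool" where
  "colour_step U a (Over c s) v v' \<longleftrightarrow> v = Tv powi s * v' + (1 - Tv powi s) * U c"
| "colour_step U a (Under c s) v v' \<longleftrightarrow> v = v' \<and> U c = v'"
| "colour_step U a NullV v v' \<longleftrightarrow> v = v'"
| "colour_step U a PtA v v' \<longleftrightarrow> v = v' \<and> a = v"
| "colour_step U a PtB v v' \<longleftrightarrow> v = v' + 1"

fun colouring :: "(nat \<Rightarrow> qT) \<Rightarrow> qT \<Rightarrow> event list \<Rightarrow> qT \<Rightarrow> qT \<Rightarrow> bool" where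
  "colouring U a [] v w \<longleftrightarrow> v = w"
| "colouring U a (e # xs) v w \<longleftrightarrow> (\<exists>v'. colour_step U a e v v' \<and> colouring U a xs v' w)"

lemma colouring_append:
  "colouring U a (xs @ ys) v w \<longleftrightarrow> (\<exists>m. colouring U a xs v m \<and> colouring U a ys m w)"
  by (induction xs arbitrary: v) auto

lemma colouring_iff_nth:
  "colouring U a xs v w \<longleftrightarrow>
     (\<exists>y. y 0 = v \<and> y (length xs) = w \<and> (\<forall>p<length xs. colour_step U a (xs ! p) (y p) (y (Suc p))))"
proof (induction xs arbitrary: v)
  case Nil
  then show ?case by auto
next
  case (Cons e xs)
  show ?case
  proof
    assume "colouring U a (e # xs) v w"
    then obtain v' y where "colour_step U a e v v'" "y 0 = v'" "y (length xs) = w"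
      "\<forall>p<length xs. colour_step U a (xs ! p) (y p) (y (Suc p))"
      using Cons.IH by auto
    then show "\<exists>y. y 0 = v \<and> y (length (e # xs)) = w
                 \<and> (\<forall>p<length (e # xs). colour_step U a ((e # xs) ! p) (y p) (y (Suc p)))"
      by (intro exI[of _ "case_nat v y"]) (auto simp: less_Suc_eq_0_disj)
  next
    assume "\<exists>y. y 0 = v \<and> y (length (e # xs)) = w
              \<and> (\<forall>p<length (e # xs). colour_step U a ((e # xs) ! p) (y p) (y (Suc p)))"
    then obtain y where y: "y 0 = v" "y (Suc (length xs)) = w"
      "\<forall>p<Suc (length xs). colour_step U a ((e # xs) ! p) (y p) (y (Suc p))"
      by auto
    then have "colouring U a xs (y 1) w"
      using Cons.IH by (auto intro!: exI[of _ "y \<circ> Suc"])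
    moreover have "colour_step U a e v (y 1)"
      using y(1) y(3)[rule_format, of 0] by simp
    ultimately show "colouring U a (e # xs) v w"
      by auto
  qed
qed

lemma colouring_marked_value_unique:
  assumes wf: "wf_diag D" and "colouring U a D v 0" and "colouring U' a' D v' 0"
  shows "a = a'"
proof -
  let ?m = "length D"
  obtain y where y: "y ?m = 0" "\<And>p. p < ?m \<Longrightarrow> colour_step U a (D ! p) (y p) (y (Suc p))"
    using assms(2) colouring_iff_nth by blast
  obtain y' where y': "y' ?m = 0" "\<And>p. p < ?m \<Longrightarrow> colour_step U' a' (D ! p) (y' p) (y' (Suc p))"
    using assms(3) colouring_iff_nth by blast
  have rec: "crossing_recurrence ?m (\<lambda>p. y p - y' p)"
  proof (rule crossing_recurrence_intro[OF wf])
    show "y ?m - y' ?m = 0"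
      using y y' by simp
  next
    fix p c s u s'
    assume p: "p < ?m" "D ! p = Over c s" and u: "u < ?m" "D ! u = Under c s'"
    have "U c = y (Suc u)" "U' c = y' (Suc u)"
      using y(2)[OF u(1)] y'(2)[OF u(1)] u(2) by simp_all
    moreover have "y p = Tv powi s * y (Suc p) + (1 - Tv powi s) * U c"
      and "y' p = Tv powi s * y' (Suc p) + (1 - Tv powi s) * U' c"
      using y(2)[OF p(1)] y'(2)[OF p(1)] p(2) by simp_all
    ultimately show "y p - y' p - (y (Suc u) - y' (Suc u))
                       = Tv powi s * (y (Suc p) - y' (Suc p) - (y (Suc u) - y' (Suc u)))"
      by (simp add: algebra_simps)
  next
    fix p assume p: "p < ?m" and "\<forall>c s. D ! p \<noteq> Over c s"
    then show "y p - y' p = y (Suc p) - y' (Suc p)"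
      using y(2)[OF p] y'(2)[OF p] by (cases "D ! p") auto
  qed
  obtain pa where pa: "pa < ?m" "D ! pa = PtA"
    using wf_diag_marked_point[OF wf, of PtA] by (auto simp: in_set_conv_nth)
  then have "a = y pa" "a' = y' pa"
    using y(2)[OF pa(1)] y'(2)[OF pa(1)] by simp_all
  then show ?thesis
    using crossing_recurrence_imp_zero[OF rec] pa by simp
qed

lemma colour_step_at_cut:
  assumes wf: "wf_diag D" and x: "x \<in> carrier_vec (num_edges D)"
    and Ax: "Amat D *\<^sub>v x = unit_vec (num_edges D) \<beta>" and \<beta>: "\<beta> < num_edges D"
    and p: "p < length D" "cuts (D ! p)"
  shows "colour_step (\<lambda>c. x $ Suc (under_pos (filter cuts D) c)) a (D ! p)
           (x $ edge_at D p - (if edge_at D p = \<beta> then 1 else 0)) (x $ edge_at D (Suc p))"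
proof -
  have "edge_at D p < num_edges D"
    using edge_at_less_length[OF p] by (simp add: num_edges_def)
  then have row: "(Amat D *\<^sub>v x) $ edge_at D p = (if edge_at D p = \<beta> then 1 else 0)"
    using Ax \<beta> by simp
  show ?thesis
  proof (cases "D ! p")
    case (Over c s)
    then obtain u s' where u: "u < length D" "D ! u = Under c s'"
      using wf_diag_Under_of_Over[OF wf] p(1) nth_mem by metis
    then have "Suc (under_pos (filter cuts D) c) = edge_at D (Suc u)"
      using under_pos_eq_edge_at[OF wf u] edge_at_Suc[OF u(1)] by (simp add: cuts_def)
    then show ?thesis
      using row Amat_mult_vec_at_Over[OF wf x p(1) Over u] Over by (simp add: algebra_simps)
  next
    case (Under c s)
    then have "Suc (under_pos (filter cuts D) c) = edge_at D (Suc p)"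
      using under_pos_eq_edge_at[OF wf p(1) Under] edge_at_Suc[OF p(1)] p(2) by simp
    then show ?thesis
      using row Amat_mult_vec_at_strand[OF x p(1)] Under by simp
  next
    case NullV
    then show ?thesis
      using row Amat_mult_vec_at_strand[OF x p(1)] by simp
  qed (use p(2) in \<open>simp_all add: cuts_def\<close>)
qed

lemma colouring_shifted_column:
  assumes wf: "wf_diag D" and pb: "pb < length D" "D ! pb = PtB"
    and x: "x \<in> carrier_vec (num_edges D)" and Ax: "Amat D *\<^sub>v x = unit_vec (num_edges D) (edge_at D pb)"
  defines "y \<equiv> \<lambda>p. x $ edge_at D p - (if edge_at D p = edge_at D pb \<and> pb < p then 1 else 0)"
  shows "colouring (\<lambda>c. x $ Suc (under_pos (filter cuts D) c)) (y (pos_of D PtA)) D (y 0) 0"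
proof -
  let ?\<beta> = "edge_at D pb"
  have \<beta>: "?\<beta> < num_edges D"
    using edge_at_le_length[of D pb] by (simp add: num_edges_def)
  have step: "colour_step (\<lambda>c. x $ Suc (under_pos (filter cuts D) c)) (y (pos_of D PtA)) (D ! p)
                (y p) (y (Suc p))" if p: "p < length D" for p
  proof (cases "cuts (D ! p)")
    case True
    have "\<not> cuts (D ! pb)"
      using pb by (simp add: cuts_def)
    note cut_pos = edge_at_cut_position[OF p True this]
    have "y p = x $ edge_at D p - (if edge_at D p = ?\<beta> then 1 else 0)" "y (Suc p) = x $ edge_at D (Suc p)"
      using cut_pos by (auto simp: y_def)
    then show ?thesis
      using colour_step_at_cut[OF wf x Ax \<beta> p True] by simp
  next
    case False
    then have "edge_at D (Suc p) = edge_at D p"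
      using edge_at_Suc[OF p] by simp
    moreover have "D ! p = PtA \<Longrightarrow> p = pos_of D PtA \<and> p \<noteq> pb" "D ! p = PtB \<Longrightarrow> p = pb"
      using pos_of_unique[OF wf_diag_marked_point(1)[OF wf] p] pb
        pos_of_unique[OF wf_diag_marked_point(1)[OF wf] pb(1)] by auto
    ultimately show ?thesis
      using False pb(2) by (cases "D ! p") (auto simp: y_def cuts_def)
  qed
  have "x $ length (filter cuts D) = (if length (filter cuts D) = ?\<beta> then 1 else 0)"
    using Amat_mult_vec_last[OF x] Ax \<beta> by (simp add: num_edges_def)
  then have "y (length D) = 0"
    using pb by (simp add: y_def)
  then show ?thesis
    using step colouring_iff_nth by blast
qed

lemma colouring_exists:
  assumes wf: "wf_diag D"
  shows "\<exists>U v. colouring U (gtilde D) D v 0"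
proof -
  define pa where "pa = pos_of D PtA"
  define pb where "pb = pos_of D PtB"
  define x where "x = col (Gmat D) (edge_at D pb)"
  have pa: "pa < length D" and pb: "pb < length D" "D ! pb = PtB"
    using pos_of_nth wf_diag_marked_point(2)[OF wf] by (auto simp: pa_def pb_def)
  have "edge_at D pb < num_edges D"
    using edge_at_le_length[of D pb] by (simp add: num_edges_def)
  note x = Gmat_column[OF wf this, folded x_def]
  have "gtilde D = x $ edge_at D pa - (if edge_at D pa = edge_at D pb \<and> pb < pa then 1 else 0)"
    using Gmat_inverse(1)[OF wf] edge_at_le_length[of D pa] \<open>edge_at D pb < _\<close>
    by (simp add: gtilde_def Let_def x_def pa_def pb_def num_edges_def)
  then have "colouring (\<lambda>c. x $ Suc (under_pos (filter cuts D) c)) (gtilde D) D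
      (x $ edge_at D 0 - (if edge_at D 0 = edge_at D pb \<and> pb < 0 then 1 else 0)) 0"
    using colouring_shifted_column[OF wf pb x] by (simp add: pa_def)
  then show ?thesis
    by blast
qed

lemma gtilde_eq_if_colouring:
  assumes wf: "wf_diag D" and "colouring U a D v 0"
  shows "gtilde D = a"
  using colouring_exists[OF wf] colouring_marked_value_unique[OF wf] assms(2) by metis

definition crossings :: "event list \<Rightarrow> nat set" where
  "crossings xs = {c. \<exists>s. Over c s \<in> set xs \<or> Under c s \<in> set xs}"

lemma crossings_append [simp]: "crossings (xs @ ys) = crossings xs \<union> crossings ys"
  by (auto simp: crossings_def)

lemma colouring_cong:
  assumes "\<And>c. c \<in> crossings xs \<Longrightarrow> U c = U' c"
  shows "colouring U a xs v w \<longleftrightarrow> colouring U' a xs v w"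
  using assms
proof (induction xs arbitrary: v)
  case Nil
  then show ?case by simp
next
  case (Cons e xs)
  have "U c = U' c" if "e = Over c s \<or> e = Under c s" for c s
    using Cons.prems that by (auto simp: crossings_def)
  then have "colour_step U a e v v' \<longleftrightarrow> colour_step U' a e v v'" for v'
    by (cases e) simp_all
  moreover have "colouring U a xs v' w \<longleftrightarrow> colouring U' a xs v' w" for v'
    using Cons.prems by (intro Cons.IH) (auto simp: crossings_def)
  ultimately show ?case
    by simp
qed

lemma colouring_fun_upd:
  "c \<notin> crossings xs \<Longrightarrow> colouring (U(c := z)) a xs v w \<longleftrightarrow> colouring U a xs v w"
  by (rule colouring_cong) auto

lemma crossing_fresh:
  assumes wf: "wf_diag X" and X: "mset X = mset A + mset B"
    and B: "Over c s \<in> set B" "Under c s' \<in> set B"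
  shows "c \<notin> crossings A"
proof
  have over: "length (filter (is_over c) A) + length (filter (is_over c) B) \<le> 1"
    and under: "length (filter (is_under c) A) + length (filter (is_under c) B) \<le> 1"
    using wf_diag_passages[OF wf, of c] length_filter_mset_sum[OF X, of "is_over c"]
      length_filter_mset_sum[OF X, of "is_under c"]
    by simp_all
  have "0 < length (filter (is_over c) B)" "0 < length (filter (is_under c) B)"
    using length_filter_pos[OF B(1), of "is_over c"] length_filter_pos[OF B(2), of "is_under c"]
    by simp_all
  moreover assume "c \<in> crossings A"
  then obtain t where "Over c t \<in> set A \<or> Under c t \<in> set A"
    by (auto simp: crossings_def)
  then have "0 < length (filter (is_over c) A) \<or> 0 < length (filter (is_under c) A)"
    using length_filter_pos[of "Over c t" A "is_over c"] length_filter_pos[of "Under c t" A "is_under c"]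
    by auto
  ultimately show False
    using over under by linarith
qed

lemma gtilde_eq_if_colouring_transfer:
  assumes wf: "wf_diag D" "wf_diag D'"
    and transfer: "\<And>U a v. colouring U a D v 0 \<Longrightarrow> \<exists>U' v'. colouring U' a D' v' 0"
  shows "gtilde D' = gtilde D"
proof -
  obtain U v where "colouring U (gtilde D) D v 0"
    using colouring_exists[OF wf(1)] by blast
  then obtain U' v' where "colouring U' (gtilde D) D' v' 0"
    using transfer by blast
  then show ?thesis
    by (rule gtilde_eq_if_colouring[OF wf(2)])
qed

section \<open>Reidemeister moves\<close>

lemma gtilde_R1_step:
  assumes R1: "R1_step D D'" and wf: "wf_diag D" "wf_diag D'"
  shows "gtilde D' = gtilde D"
proof (rule gtilde_eq_if_colouring_transfer[OF wf])
  fix U a v assume "colouring U a D v 0"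
  obtain p0 p1 c s seg where seg: "seg = [Over c s, Under c s] \<or> seg = [Under c s, Over c s]"
    and D: "D = p0 @ p1" and D': "D' = p0 @ seg @ p1"
    using R1 unfolding R1_step_def by blast
  have "c \<notin> crossings (p0 @ p1)"
    by (rule crossing_fresh[OF wf(2), of "p0 @ p1" seg c s s]) (use seg in \<open>auto simp: D'\<close>)
  moreover obtain m where "colouring U a p0 v m" "colouring U a p1 m 0"
    using \<open>colouring U a D v 0\<close> by (auto simp: D colouring_append)
  moreover have "colouring (U(c := m)) a seg m m"
    using seg by (auto simp: algebra_simps)
  ultimately have "colouring (U(c := m)) a D' v 0"
    by (auto simp: D' colouring_append colouring_fun_upd)
  then show "\<exists>U' v'. colouring U' a D' v' 0"
    by blast
qed

lemma colouring_over_pair: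
  assumes "U c1 = u" "U c2 = u"
  shows "colouring U a [Over c1 s, Over c2 (- s)] w w"
proof -
  define v where "v = Tv powi (- s) * w + (1 - Tv powi (- s)) * u"
  have "Tv powi s * Tv powi (- s) = 1"
    by (simp add: power_int_minus)
  then have "w = Tv powi s * v + (1 - Tv powi s) * u"
    by (simp add: v_def algebra_simps)
  then show ?thesis
    using assms by (auto simp: v_def)
qed

lemma gtilde_R2_step:
  assumes R2: "R2_step D D'" and wf: "wf_diag D" "wf_diag D'"
  shows "gtilde D' = gtilde D"
proof (rule gtilde_eq_if_colouring_transfer[OF wf])
  fix U a v assume "colouring U a D v 0"
  obtain p0 p1 p2 c1 c2 s par ofirst ov un where c12: "c1 \<noteq> c2"
    and ov: "ov = [Over c1 s, Over c2 (- s)]"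
    and un: "un = (if par then [Under c1 s, Under c2 (- s)] else [Under c2 (- s), Under c1 s])"
    and D: "D = p0 @ p1 @ p2"
    and D': "D' = p0 @ (if ofirst then ov else un) @ p1 @ (if ofirst then un else ov) @ p2"
    using R2 unfolding R2_step_def by blast
  have D'_mset: "mset D' = mset (p0 @ p1 @ p2) + mset (ov @ un)"
    by (simp add: D')
  have "c1 \<notin> crossings (p0 @ p1 @ p2)"
    by (rule crossing_fresh[OF wf(2) D'_mset, of c1 s s]) (simp_all add: ov un)
  moreover have "c2 \<notin> crossings (p0 @ p1 @ p2)"
    by (rule crossing_fresh[OF wf(2) D'_mset, of c2 "- s" "- s"]) (simp_all add: ov un)
  moreover obtain m1 m2 where m: "colouring U a p0 v m1" "colouring U a p1 m1 m2" "colouring U a p2 m2 0"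
    using \<open>colouring U a D v 0\<close> by (auto simp: D colouring_append)
  define u where "u = (if ofirst then m2 else m1)"
  define U' where "U' = U(c1 := u, c2 := u)"
  have "colouring U' a p0 v m1" "colouring U' a p1 m1 m2" "colouring U' a p2 m2 0"
    using m \<open>c1 \<notin> _\<close> \<open>c2 \<notin> _\<close> by (simp_all add: U'_def colouring_fun_upd)
  moreover have "colouring U' a ov w w" for w
    using colouring_over_pair[of U' c1 u c2] c12 by (simp add: ov U'_def)
  moreover have "colouring U' a un u u"
    using c12 by (simp add: un U'_def)
  ultimately have "colouring U' a D' v 0"
    by (cases ofirst) (simp_all add: D' u_def colouring_append; blast)+
  then show "\<exists>U' v'. colouring U' a D' v' 0"
    by blast
qed

lemma permutation_012:
  fixes f :: "nat \<Rightarrow> nat"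
  assumes f: "f ` {0, 1, 2} = {0, 1, 2}"
  shows "f 0 \<noteq> f 1" "f 0 \<noteq> f 2" "f 1 \<noteq> f 2"
    and "\<And>i. i < 3 \<Longrightarrow> f i < 3"
    and "\<And>j. j < 3 \<Longrightarrow> j = f 0 \<or> j = f 1 \<or> j = f 2"
proof -
  have "card (f ` {0, 1, 2}) = card {0::nat, 1, 2}"
    by (simp only: f)
  then have inj: "inj_on f {0, 1, 2}"
    by (intro eq_card_imp_inj_on) simp_all
  show "f 0 \<noteq> f 1" "f 0 \<noteq> f 2" "f 1 \<noteq> f 2"
    by (rule inj_on_contraD[OF inj]; simp)+
  show "f i < 3" if "i < 3" for i
  proof -
    have "i \<in> {0, 1, 2}"
      using that by auto
    then have "f i \<in> f ` {0, 1, 2}"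
      by (rule imageI)
    then show ?thesis
      unfolding f by auto
  qed
  show "j = f 0 \<or> j = f 1 \<or> j = f 2" if "j < 3" for j
  proof -
    have "j \<in> {0, 1, 2}"
      using that by auto
    then have "j \<in> f ` {0, 1, 2}"
      unfolding f .
    then show ?thesis
      by simp
  qed
qed

text \<open>Of the three crossings only the one between the middle strand M and the top strand T changes its
value: M passes under T at the other end of its segment after the move, so the value becomes the
one at the start of M if M meets the bottom strand B first, and the one at its end otherwise. The
remaining 6 * 8 * 3 cases (height order, signs, strand) are identities in Q(T).\<close>

lemma r3_colouring_case:
  assumes e: "e 0 = 1 \<or> e 0 = -1" "e 1 = 1 \<or> e 1 = -1" "e 2 = 1 \<or> e 2 = -1"
    and h: "h B < h M" "h M < h T"
    and BMT: "(B, M, T) \<in> {(0,1,2), (0,2,1), (1,0,2), (1,2,0), (2,0,1), (2,1,0)}"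
    and cn: "distinct [cn 0 1, cn 0 2, cn 1 2]"
    and before: "\<And>i. i < 3 \<Longrightarrow> colouring U a (r3_before e h cn i) (st i) (en i)" and "i < 3"
  shows "colouring (U(cn (min M T) (max M T) := (if hd (r3_order e M) = B then st M else en M))) a
           (r3_after e h cn i) (st i) (en i)"
proof -
  have b: "colouring U a (r3_before e h cn 0) (st 0) (en 0)"
    "colouring U a (r3_before e h cn 1) (st 1) (en 1)"
    "colouring U a (r3_before e h cn 2) (st 2) (en 2)"
    using before by simp_all
  have i: "i = 0 \<or> i = 1 \<or> i = 2"
    using \<open>i < 3\<close> by auto
  obtain c01 c02 c12 where c: "cn 0 1 = c01" "cn 0 2 = c02" "cn 1 2 = c12"
    by blast
  then have c': "cn 0 (Suc 0) = c01" "cn (Suc 0) 2 = c12" "cn (Suc 0) (Suc (Suc 0)) = c12"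
    "cn 0 (Suc (Suc 0)) = c02"
    by (simp_all add: numeral_2_eq_2)
  have "c01 \<noteq> c02" "c01 \<noteq> c12" "c02 \<noteq> c12" "c02 \<noteq> c01" "c12 \<noteq> c01" "c12 \<noteq> c02"
    using cn c by auto
  from BMT e i b h this show ?thesis
    apply (simp only: insert_iff empty_iff prod.inject)
    apply (elim disjE conjE)
    apply (simp_all add: r3_after_def r3_before_def r3_order_def r3_event_def kap_def kap0_def
        power_int_minus c c')
    apply (auto simp: field_simps)
    done
qed

lemma r3_colouring:
  assumes e: "\<forall>i<3. e i = 1 \<or> e i = -1" and h: "h ` {0, 1, 2} = {0, 1, 2}"
    and cn: "distinct [cn 0 1, cn 0 2, cn 1 2]"
    and before: "\<And>i. i < 3 \<Longrightarrow> colouring U a (r3_before e h cn i) (st i) (en i)"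
  shows "\<exists>M T z. M < 3 \<and> T < 3 \<and> h M \<noteq> h T \<and>
           (\<forall>i<3. colouring (U(cn (min M T) (max M T) := z)) a (r3_after e h cn i) (st i) (en i))"
proof -
  have "h 0 \<noteq> h 1" "h 0 \<noteq> h 2" "h 1 \<noteq> h 2"
    using permutation_012[OF h] by simp_all
  then consider "h 0 < h 1" "h 1 < h 2" | "h 0 < h 2" "h 2 < h 1" | "h 1 < h 0" "h 0 < h 2"
    | "h 1 < h 2" "h 2 < h 0" | "h 2 < h 0" "h 0 < h 1" | "h 2 < h 1" "h 1 < h 0"
    by linarith
  then obtain B M T where hBM: "h B < h M" and hMT: "h M < h T"
    and BMT: "(B, M, T) \<in> {(0,1,2), (0,2,1), (1,0,2), (1,2,0), (2,0,1), (2,1,0)}"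
    by cases blast+
  have "e 0 = 1 \<or> e 0 = -1" "e 1 = 1 \<or> e 1 = -1" "e 2 = 1 \<or> e 2 = -1"
    using e by simp_all
  note after = r3_colouring_case[OF this hBM hMT BMT cn before]
  have "M < 3" "T < 3"
    using BMT by auto
  with hMT after show ?thesis
    by (intro exI[of _ M] exI[of _ T]) auto
qed

lemma r3_colouring_permuted:
  fixes \<sigma> :: "nat \<Rightarrow> nat"
  assumes e: "\<forall>i<3. e i = 1 \<or> e i = -1" and h: "h ` {0, 1, 2} = {0, 1, 2}"
    and \<sigma>: "\<sigma> ` {0, 1, 2} = {0, 1, 2}" and cn: "distinct [cn 0 1, cn 0 2, cn 1 2]"
    and before: "\<And>k. k < 3 \<Longrightarrow> colouring U a (r3_before e h cn (\<sigma> k)) (m k) (n k)"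
  shows "\<exists>M T z. M < 3 \<and> T < 3 \<and> h M \<noteq> h T \<and>
           (\<forall>k<3. colouring (U(cn (min M T) (max M T) := z)) a (r3_after e h cn (\<sigma> k)) (m k) (n k))"
proof -
  note \<sigma>_perm = permutation_012[OF \<sigma>]
  define st where "st i = (if i = \<sigma> 0 then m 0 else if i = \<sigma> 1 then m 1 else m 2)" for i
  define en where "en i = (if i = \<sigma> 0 then n 0 else if i = \<sigma> 1 then n 1 else n 2)" for i
  have st_en: "st (\<sigma> k) = m k" "en (\<sigma> k) = n k" if "k < 3" for k
  proof -
    have "k = 0 \<or> k = 1 \<or> k = 2"
      using that by auto
    then show "st (\<sigma> k) = m k" "en (\<sigma> k) = n k"
      using \<sigma>_perm(1-3) by (auto simp: st_def en_def)
  qed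
  have "colouring U a (r3_before e h cn i) (st i) (en i)" if "i < 3" for i
    using \<sigma>_perm(5)[OF that] before[of 0] before[of 1] before[of 2] st_en[of 0] st_en[of 1] st_en[of 2]
    by auto
  then obtain M T z where MT: "M < 3" "T < 3" "h M \<noteq> h T"
    and after: "\<forall>i<3. colouring (U(cn (min M T) (max M T) := z)) a (r3_after e h cn i) (st i) (en i)"
    using r3_colouring[OF e h cn] by blast
  have "colouring (U(cn (min M T) (max M T) := z)) a (r3_after e h cn (\<sigma> k)) (m k) (n k)" if "k < 3" for k
    using after[rule_format, OF \<sigma>_perm(4)[OF that]] st_en[OF that] by simp
  with MT show ?thesis
    by blast
qed

lemma r3_before_passages:
  assumes ij: "i < 3" "j < 3" and h: "h i \<noteq> h j"
  shows "\<exists>s s'. Over (cn (min i j) (max i j)) s \<in> set (r3_before e h cn i @ r3_before e h cn j)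
              \<and> Under (cn (min i j) (max i j)) s' \<in> set (r3_before e h cn i @ r3_before e h cn j)"
proof -
  have "i \<noteq> j" "i \<in> {0, 1, 2}" "j \<in> {0, 1, 2}"
    using ij h by auto
  then have "r3_event e h cn i j \<in> set (r3_before e h cn i)"
    "r3_event e h cn j i \<in> set (r3_before e h cn j)"
    by (auto simp: r3_before_def r3_order_def)
  moreover have "min j i = min i j" "max j i = max i j"
    by simp_all
  ultimately show ?thesis
    using h by (cases "h j < h i") (auto simp: r3_event_def)
qed

lemma r3_crossing_fresh:
  fixes \<sigma> :: "nat \<Rightarrow> nat"
  assumes wf: "wf_diag X" and \<sigma>: "\<sigma> ` {0, 1, 2} = {0, 1, 2}"
    and X: "mset X = mset A + mset (r3_before e h cn (\<sigma> 0) @ r3_before e h cn (\<sigma> 1) @ r3_before e h cn (\<sigma> 2))"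
    and MT: "M < 3" "T < 3" "h M \<noteq> h T"
  shows "cn (min M T) (max M T) \<notin> crossings A"
proof -
  let ?blocks = "r3_before e h cn (\<sigma> 0) @ r3_before e h cn (\<sigma> 1) @ r3_before e h cn (\<sigma> 2)"
  have "set (r3_before e h cn i) \<subseteq> set ?blocks" if "i < 3" for i
    using permutation_012(5)[OF \<sigma> that] by auto
  then obtain s s' where "Over (cn (min M T) (max M T)) s \<in> set ?blocks"
    "Under (cn (min M T) (max M T)) s' \<in> set ?blocks"
    using r3_before_passages[OF MT, where e=e and cn=cn] MT by auto
  then show ?thesis
    by (rule crossing_fresh[OF wf X])
qed

lemma gtilde_R3_step:
  assumes R3: "R3_step D D'" and wf: "wf_diag D" "wf_diag D'"
  shows "gtilde D' = gtilde D"
proof (rule gtilde_eq_if_colouring_transfer[OF wf])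
  fix U a v assume "colouring U a D v 0"
  obtain p0 p1 p2 p3 e h cn and \<sigma> :: "nat \<Rightarrow> nat"
    where e: "\<forall>i<3. e i = 1 \<or> e i = -1" and h: "h ` {0, 1, 2} = {0, 1, 2}"
      and \<sigma>: "\<sigma> ` {0, 1, 2} = {0, 1, 2}" and cn: "distinct [cn 0 1, cn 0 2, cn 1 2]"
      and D: "D = p0 @ r3_before e h cn (\<sigma> 0) @ p1 @ r3_before e h cn (\<sigma> 1) @ p2
                 @ r3_before e h cn (\<sigma> 2) @ p3"
      and D': "D' = p0 @ r3_after e h cn (\<sigma> 0) @ p1 @ r3_after e h cn (\<sigma> 1) @ p2
                 @ r3_after e h cn (\<sigma> 2) @ p3"
    using R3 unfolding R3_step_def by (elim exE conjE) (rule that; assumption)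
  obtain m n :: "nat \<Rightarrow> qT" where outside: "colouring U a p0 v (m 0)" "colouring U a p1 (n 0) (m 1)"
      "colouring U a p2 (n 1) (m 2)" "colouring U a p3 (n 2) 0"
    and inside: "colouring U a (r3_before e h cn (\<sigma> 0)) (m 0) (n 0)"
      "colouring U a (r3_before e h cn (\<sigma> 1)) (m 1) (n 1)"
      "colouring U a (r3_before e h cn (\<sigma> 2)) (m 2) (n 2)"
  proof -
    from \<open>colouring U a D v 0\<close> obtain m0 n0 m1 n1 m2 n2 where
      "colouring U a p0 v m0" "colouring U a p1 n0 m1" "colouring U a p2 n1 m2" "colouring U a p3 n2 0"
      "colouring U a (r3_before e h cn (\<sigma> 0)) m0 n0" "colouring U a (r3_before e h cn (\<sigma> 1)) m1 n1"
      "colouring U a (r3_before e h cn (\<sigma> 2)) m2 n2"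
      unfolding D colouring_append by blast
    then show ?thesis
      by (intro that[of "\<lambda>k::nat. if k = 0 then m0 else if k = 1 then m1 else m2"
            "\<lambda>k::nat. if k = 0 then n0 else if k = 1 then n1 else n2"]) simp_all
  qed
  have "colouring U a (r3_before e h cn (\<sigma> k)) (m k) (n k)" if "k < 3" for k
  proof -
    have "k = 0 \<or> k = 1 \<or> k = 2"
      using that by auto
    then show ?thesis
      using inside by auto
  qed
  then obtain M T z where MT: "M < 3" "T < 3" "h M \<noteq> h T"
    and after: "\<forall>k<3. colouring (U(cn (min M T) (max M T) := z)) a (r3_after e h cn (\<sigma> k)) (m k) (n k)"
    using r3_colouring_permuted[OF e h \<sigma> cn] by blast
  have "mset D = mset (p0 @ p1 @ p2 @ p3)
      + mset (r3_before e h cn (\<sigma> 0) @ r3_before e h cn (\<sigma> 1) @ r3_before e h cn (\<sigma> 2))"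
    by (simp add: D)
  then have "cn (min M T) (max M T) \<notin> crossings (p0 @ p1 @ p2 @ p3)"
    by (rule r3_crossing_fresh[OF wf(1) \<sigma> _ MT])
  moreover have "colouring (U(cn (min M T) (max M T) := z)) a (r3_after e h cn (\<sigma> k)) (m k) (n k)"
    if "k \<in> {0, 1, 2}" for k
    using after that by auto
  ultimately have "colouring (U(cn (min M T) (max M T) := z)) a D' v 0"
    using outside unfolding D' colouring_append by (simp add: colouring_fun_upd) blast
  then show "\<exists>U' v'. colouring U' a D' v' 0"
    by blast
qed

theorem mainTheorem3:
  shows "(\<forall>D D'. reid_move D D' \<longrightarrow> gtilde D' = gtilde D) \<and>
         (\<forall>D D'. reid_move\<^sup>*\<^sup>* D D' \<longrightarrow> gtilde D' = gtilde D)"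
proof -
  have move: "gtilde D' = gtilde D" if "reid_move D D'" for D D'
  proof -
    have wf: "wf_diag D" "wf_diag D'"
      using that by (simp_all add: reid_move_def)
    have "R1_step D D' \<or> R1_step D' D \<or> R2_step D D' \<or> R2_step D' D \<or> R3_step D D' \<or> R3_step D' D"
      using that by (simp add: reid_move_def)
    then show ?thesis
      using gtilde_R1_step gtilde_R2_step gtilde_R3_step wf by metis
  qed
  have "gtilde D' = gtilde D" if "reid_move\<^sup>*\<^sup>* D D'" for D D'
    using that by (induction rule: rtranclp_induct) (simp_all add: move)
  with move show ?thesis
    by blast
qed

end
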